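(* An L-state $\rho\in\mathscr L$ is an X-state if and only if its Bloch vector $(\rho_I)_{\emptyset\ne I}\in\bigoplus_{\emptyset\ne I}\mathscr V_I$ lies in $X(\mathfrak B)$ for some longitudinal system $\mathfrak B$.
   Context: Let $V_1,\dots,V_n$ be two-dimensional complex vector spaces, $\mathscr V_i=\mathfrak{sl}(V_i)$ with the form $\langle A,B\rangle=\tfrac12\operatorname{tr}(AB)$, and $\mathscr L$ the set of trace-one endomorphisms of $V_1\otimes\cdots\otimes V_n$. An X-state is a $\rho\in\mathscr L$ for which there exist ordered bases $\{e^i_0,e^i_1\}$ of the $V_i$ such that $\rho$ maps the span of the basis tensors $e^1_{\phi(1)}\otimes\cdots\otimes e^n_{\phi(n)}$ ($\phi:\{1,\dots,n\}\to\{0,1\}$) with $\sum\phi(i)$ even into itself, and the span of those with $\sum\phi(i)$ odd into itself. Bloch vector: for $\emptyset\ne I=\{i_1<\dots<i_k\}$, $\mathscr V_I=\mathscr V_{i_1}\otimes\cdots\otimes\mathscr V_{i_k}$ is regarded inside $\mathrm{End}(V_1\otimes\cdots\otimes V_n)$ by tensoring with identities on the other factors; each $\rho\in\mathscr L$ is uniquely $\rho=2^{-n}\mathrm{id}+\sum_{\emptyset\ne I}\rho_I$ with $\rho_I\in\mathscr V_I$. A longitudinal system $\mathfrak B=(\mathscr V_1^\ell,\dots,\mathscr V_n^\ell)$ consists of lines $\mathscr V_i^\ell\subseteq\mathscr V_i$ spanned by vectors $v$ with $\langle v,v\rangle\neq0$; $\mathscr V_i^t=(\mathscr V_i^\ell)^\perp$.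 $\mathscr V_I^e$ is the span of tensors $x_{i_1}\otimes\cdots\otimes x_{i_k}$ with each $x_{i_j}\in\mathscr V_{i_j}^\ell$ or $x_{i_j}\in\mathscr V_{i_j}^t$ and an even number of them transversal; $X(\mathfrak B)=\bigoplus_{\emptyset\ne I}\mathscr V_I^e$. *)

theory Defs
  imports Complex_Main
begin

text \<open>Concrete model: each V_i is C^2 with standard coordinates indexed by bool
(False = 0, True = 1); the factors are numbered 0..n-1.  Basis tensors / coordinates
of V_1 (x) ... (x) V_n are indexed by bool lists of length n.  Vectors are functions
bool list => complex, endomorphisms are matrices bool list => bool list => complex
(row index first), required to vanish outside the index set.\<close>

type_synonym vec = "bool list \<Rightarrow> complex"
type_synonym op = "bool list \<Rightarrow> bool list \<Rightarrow> complex"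
type_synonym m2 = "bool \<Rightarrow> bool \<Rightarrow> complex"

definition idx :: "nat \<Rightarrow> bool list set" where
  "idx n = {xs. length xs = n}"

definition opapp :: "nat \<Rightarrow> op \<Rightarrow> vec \<Rightarrow> vec" where
  "opapp n A v = (\<lambda>xs. \<Sum>ys\<in>idx n. A xs ys * v ys)"

definition trace_op :: "nat \<Rightarrow> op \<Rightarrow> complex" where
  "trace_op n A = (\<Sum>xs\<in>idx n. A xs xs)"

definition Lset :: "nat \<Rightarrow> op set" where
  "Lset n = {\<rho>. (\<forall>xs ys. xs \<notin> idx n \<or> ys \<notin> idx n \<longrightarrow> \<rho> xs ys = 0)
                 \<and> trace_op n \<rho> = 1}"

definition basis2 :: "(bool \<Rightarrow> complex) \<Rightarrow> (bool \<Rightarrow> complex) \<Rightarrow> bool" where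
  "basis2 e0 e1 \<longleftrightarrow> (\<forall>a b. (\<forall>t. a * e0 t + b * e1 t = 0) \<longrightarrow> a = 0 \<and> b = 0)"

text \<open>Basis tensor e^1_{phi(1)} (x) ... (x) e^n_{phi(n)}, where e i b is e^i_b.\<close>
definition etens :: "nat \<Rightarrow> (nat \<Rightarrow> bool \<Rightarrow> bool \<Rightarrow> complex) \<Rightarrow> bool list \<Rightarrow> vec" where
  "etens n e \<phi> = (\<lambda>xs. if xs \<in> idx n then (\<Prod>i<n. e i (\<phi> ! i) (xs ! i)) else 0)"

definition parity :: "bool list \<Rightarrow> bool" where
  "parity \<phi> = even (length (filter id \<phi>))"

definition X_state :: "nat \<Rightarrow> op \<Rightarrow> bool" where
  "X_state n \<rho> \<longleftrightarrow> (\<exists>e. (\<forall>i<n. basis2 (e i False) (e i True)) \<and>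
     (\<forall>\<phi>\<in>idx n. \<exists>c. opapp n \<rho> (etens n e \<phi>) =
        (\<lambda>xs. \<Sum>\<psi>\<in>{\<psi>\<in>idx n. parity \<psi> = parity \<phi>}. c \<psi> * etens n e \<psi> xs)))"

definition cspan :: "op set \<Rightarrow> op set" where
  "cspan S = {f. \<exists>F c. finite F \<and> F \<subseteq> S \<and> f = (\<lambda>xs ys. \<Sum>g\<in>F. c g * g xs ys)}"

definition id2 :: m2 where
  "id2 = (\<lambda>a b. if a = b then 1 else 0)"

definition sl2 :: "m2 set" where
  "sl2 = {A. A False False + A True True = 0}"

definition form2 :: "m2 \<Rightarrow> m2 \<Rightarrow> complex" where
  "form2 A B = (\<Sum>a\<in>UNIV. \<Sum>b\<in>UNIV. A a b * B b a) / 2"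

definition optens :: "nat \<Rightarrow> (nat \<Rightarrow> m2) \<Rightarrow> op" where
  "optens n A = (\<lambda>xs ys. if xs \<in> idx n \<and> ys \<in> idx n
                         then (\<Prod>i<n. A i (xs ! i) (ys ! i)) else 0)"

definition idop :: "nat \<Rightarrow> op" where
  "idop n = optens n (\<lambda>_. id2)"

definition Isets :: "nat \<Rightarrow> nat set set" where
  "Isets n = Pow {..<n} - {{}}"

text \<open>V_I regarded inside End(V_1 (x) ... (x) V_n) (identities on factors outside I).\<close>
definition VI :: "nat \<Rightarrow> nat set \<Rightarrow> op set" where
  "VI n I = cspan {optens n A | A. (\<forall>i\<in>I. A i \<in> sl2) \<and> (\<forall>i<n. i \<notin> I \<longrightarrow> A i = id2)}"

definition bloch :: "nat \<Rightarrow> op \<Rightarrow> nat set \<Rightarrow> op" where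
  "bloch n \<rho> = (THE f. (\<forall>I\<in>Isets n. f I \<in> VI n I) \<and> (\<forall>I. I \<notin> Isets n \<longrightarrow> f I = (\<lambda>_ _. 0)) \<and>
       \<rho> = (\<lambda>xs ys. idop n xs ys / 2 ^ n + (\<Sum>I\<in>Isets n. f I xs ys)))"

text \<open>Longitudinal lines: V_i^l is spanned by v i, with v i in sl2 and <v,v> \<noteq> 0.\<close>
definition long_sys :: "nat \<Rightarrow> (nat \<Rightarrow> m2) \<Rightarrow> bool" where
  "long_sys n v \<longleftrightarrow> (\<forall>i<n. v i \<in> sl2 \<and> form2 (v i) (v i) \<noteq> 0)"

definition long_line :: "m2 \<Rightarrow> m2 set" where
  "long_line w = {(\<lambda>a b. c * w a b) | c. True}"

definition trans_space :: "m2 \<Rightarrow> m2 set" where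
  "trans_space w = {x \<in> sl2. \<forall>y\<in>long_line w. form2 x y = 0}"

definition VIe :: "nat \<Rightarrow> (nat \<Rightarrow> m2) \<Rightarrow> nat set \<Rightarrow> op set" where
  "VIe n v I = cspan {optens n A | A. (\<forall>i<n. i \<notin> I \<longrightarrow> A i = id2) \<and>
      (\<exists>T\<subseteq>I. even (card T) \<and> (\<forall>i\<in>I. (i \<in> T \<longrightarrow> A i \<in> trans_space (v i)) \<and>
                                         (i \<notin> T \<longrightarrow> A i \<in> long_line (v i))))}"

end

theory Submission
  imports Defs
begin

text \<open>
  For ordered bases \<open>e\<^sup>i\<close> let \<open>Z\<^sub>i\<close> be the reflection of \<open>V\<^sub>i\<close> with eigenvectors \<open>e\<^sup>i\<^sub>0\<close> (eigenvalue \<open>1\<close>)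
  and \<open>e\<^sup>i\<^sub>1\<close> (eigenvalue \<open>-1\<close>). The even and odd spans are the two eigenspaces of
  \<open>Z = Z\<^sub>1 \<otimes> \<dots> \<otimes> Z\<^sub>n\<close>, so \<open>\<rho>\<close> is an X-state for these bases iff \<open>Z \<rho> Z = \<rho>\<close>.
  Traceless reflections are, up to scaling, the non-isotropic elements \<open>v\<close> of \<open>sl(V\<^sub>i)\<close>, and
  conjugation by \<open>Z\<^sub>i\<close> fixes the longitudinal line \<open>\<complex> v\<close> and negates its orthogonal complement.
  Hence conjugation by \<open>Z\<close> multiplies a tensor of longitudinal and transversal factors by
  \<open>(-1)\<close> to the number of transversal factors. It also preserves every \<open>V\<^sub>I\<close>, and the Bloch
  components are the projections of \<open>\<rho>\<close> onto the \<open>V\<^sub>I\<close>; so \<open>Z \<rho> Z = \<rho>\<close> iff every \<open>\<rho>\<^sub>I\<close>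
  is fixed by the conjugation, i.e. lies in \<open>V\<^sub>I\<^sup>e\<close>.
\<close>

lemma idx_Suc: "idx (Suc n) = (\<lambda>(b, ys). b # ys) ` (UNIV \<times> idx n)"
  unfolding idx_def by (auto simp: image_def length_Suc_conv)

lemma finite_idx [simp]: "finite (idx n)"
  by (induction n) (simp_all add: idx_Suc, simp add: idx_def)

lemma nth_eq_iff_idx:
  "xs \<in> idx n \<Longrightarrow> ys \<in> idx n \<Longrightarrow> xs = ys \<longleftrightarrow> (\<forall>i<n. xs ! i = ys ! i)"
  by (auto simp: idx_def list_eq_iff_nth_eq)

lemma sum_UNIV_bool: "(\<Sum>b\<in>UNIV. f b) = f False + (f True :: 'a :: comm_monoid_add)"
  by (simp add: UNIV_bool add.commute)

lemma prod_indicator: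
  "(\<Prod>i<(n::nat). if Q i then 1 else 0 :: complex) = (if \<forall>i<n. Q i then 1 else 0)"
  by (induction n) (auto simp: less_Suc_eq)

lemma sum_idx_prod:
  "(\<Sum>ys\<in>idx n. \<Prod>i<n. f i (ys ! i)) = (\<Prod>i<n. \<Sum>b\<in>UNIV. (f i b :: complex))"
proof (induction n arbitrary: f)
  case 0
  then show ?case by (simp add: idx_def)
next
  case (Suc n)
  have inj: "inj_on (\<lambda>(b, ys). b # ys) (UNIV \<times> idx n)"
    by (auto simp: inj_on_def)
  have "(\<Sum>ys\<in>idx (Suc n). \<Prod>i<Suc n. f i (ys ! i))
      = (\<Sum>(b, ys)\<in>UNIV \<times> idx n. \<Prod>i<Suc n. f i ((b # ys) ! i))"
    unfolding idx_Suc by (subst sum.reindex[OF inj]) (simp add: case_prod_unfold)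
  also have "\<dots> = (\<Sum>b\<in>UNIV. \<Sum>ys\<in>idx n. f 0 b * (\<Prod>i<n. f (Suc i) (ys ! i)))"
    by (simp del: prod.lessThan_Suc add: sum.cartesian_product[symmetric] prod.lessThan_Suc_shift)
  also have "\<dots> = (\<Sum>b\<in>UNIV. f 0 b) * (\<Prod>i<n. \<Sum>b\<in>UNIV. f (Suc i) b)"
    by (simp add: sum_distrib_left[symmetric] sum_distrib_right Suc.IH[where f = "\<lambda>i. f (Suc i)"])
  also have "\<dots> = (\<Prod>i<Suc n. \<Sum>b\<in>UNIV. f i b)"
    by (simp del: prod.lessThan_Suc add: prod.lessThan_Suc_shift)
  finally show ?case .
qed

lemma sum2_idx_prod:
  "(\<Sum>xs\<in>idx n. \<Sum>ys\<in>idx n. \<Prod>i<n. g i (xs ! i) (ys ! i))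
   = (\<Prod>i<n. \<Sum>a\<in>UNIV. \<Sum>b\<in>UNIV. (g i a b :: complex))"
proof -
  have "(\<Sum>ys\<in>idx n. \<Prod>i<n. g i (xs ! i) (ys ! i)) = (\<Prod>i<n. \<Sum>b\<in>UNIV. g i (xs ! i) b)" for xs
    by (rule sum_idx_prod)
  then show ?thesis
    using sum_idx_prod[where f = "\<lambda>i a. \<Sum>b\<in>UNIV. g i a b"] by simp
qed

definition op_linear :: "(op \<Rightarrow> op) \<Rightarrow> bool" where
  "op_linear L \<longleftrightarrow> (\<forall>F c. finite F \<longrightarrow>
     L (\<lambda>xs ys. \<Sum>g\<in>F. c g * g xs ys) = (\<lambda>xs ys. \<Sum>g\<in>F. c g * L g xs ys))"

definition kernel_map ::
  "nat \<Rightarrow> (bool list \<Rightarrow> bool list \<Rightarrow> bool list \<Rightarrow> bool list \<Rightarrow> complex) \<Rightarrow> op \<Rightarrow> op" where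
  "kernel_map n K X = (\<lambda>xs ys. \<Sum>xs'\<in>idx n. \<Sum>ys'\<in>idx n. K xs ys xs' ys' * X xs' ys')"

lemma op_linear_kernel_map: "op_linear (kernel_map n K)"
  unfolding op_linear_def
proof (intro allI impI ext)
  fix F :: "op set" and c xs ys
  assume "finite F"
  have "kernel_map n K (\<lambda>xs ys. \<Sum>g\<in>F. c g * g xs ys) xs ys
      = (\<Sum>xs'\<in>idx n. \<Sum>ys'\<in>idx n. \<Sum>g\<in>F. c g * (K xs ys xs' ys' * g xs' ys'))"
    by (simp add: kernel_map_def sum_distrib_left mult_ac)
  also have "\<dots> = (\<Sum>g\<in>F. \<Sum>xs'\<in>idx n. \<Sum>ys'\<in>idx n. c g * (K xs ys xs' ys' * g xs' ys'))"
    by (simp add: sum.swap[of _ F] sum.swap[of _ F "idx n"])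
  also have "\<dots> = (\<Sum>g\<in>F. c g * kernel_map n K g xs ys)"
    by (simp add: kernel_map_def sum_distrib_left)
  finally show "kernel_map n K (\<lambda>xs ys. \<Sum>g\<in>F. c g * g xs ys) xs ys
      = (\<Sum>g\<in>F. c g * kernel_map n K g xs ys)" .
qed

lemma kernel_map_sum:
  "finite F \<Longrightarrow> kernel_map n K (\<lambda>xs ys. \<Sum>g\<in>F. h g xs ys) = (\<lambda>xs ys. \<Sum>g\<in>F. kernel_map n K (h g) xs ys)"
  by (simp add: kernel_map_def sum_distrib_left sum.swap[of _ F])

lemma kernel_map_bloch_form:
  "kernel_map n K (\<lambda>xs ys. X xs ys / c + (\<Sum>I\<in>Isets n. f I xs ys))
   = (\<lambda>xs ys. kernel_map n K X xs ys / c + (\<Sum>I\<in>Isets n. kernel_map n K (f I) xs ys))"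
  by (simp add: kernel_map_def algebra_simps sum.distrib sum_divide_distrib
      sum_distrib_left sum.swap[of _ "Isets n"])

lemma cspan_zero: "(\<lambda>_ _. 0) \<in> cspan S"
  unfolding cspan_def by (intro CollectI exI[of _ "{}"]) auto

lemma cspan_base: "g \<in> S \<Longrightarrow> g \<in> cspan S"
  unfolding cspan_def by (intro CollectI exI[of _ "{g}"] exI[of _ "\<lambda>_. 1"]) auto

lemma cspan_scale: "f \<in> cspan S \<Longrightarrow> (\<lambda>xs ys. a * f xs ys) \<in> cspan S"
  unfolding cspan_def
proof (elim CollectE exE conjE, intro CollectI)
  fix F c assume "finite F" "F \<subseteq> S" "f = (\<lambda>xs ys. \<Sum>g\<in>F. c g * g xs ys)"
  then show "\<exists>F c. finite F \<and> F \<subseteq> S \<and> (\<lambda>xs ys. a * f xs ys) = (\<lambda>xs ys. \<Sum>g\<in>F. c g * g xs ys)"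
    by (intro exI[of _ F] exI[of _ "\<lambda>g. a * c g"]) (auto simp: sum_distrib_left mult_ac)
qed

lemma cspan_add: "f \<in> cspan S \<Longrightarrow> h \<in> cspan S \<Longrightarrow> (\<lambda>xs ys. f xs ys + h xs ys) \<in> cspan S"
  unfolding cspan_def
proof (elim CollectE exE conjE, intro CollectI)
  fix F c G d
  assume F: "finite F" "F \<subseteq> S" "f = (\<lambda>xs ys. \<Sum>g\<in>F. c g * g xs ys)"
    and G: "finite G" "G \<subseteq> S" "h = (\<lambda>xs ys. \<Sum>g\<in>G. d g * g xs ys)"
  define e where "e g = (if g \<in> F then c g else 0) + (if g \<in> G then d g else 0)" for g
  have "(\<Sum>g\<in>F \<union> G. e g * g xs ys) = (\<Sum>g\<in>F. c g * g xs ys) + (\<Sum>g\<in>G. d g * g xs ys)" for xs ys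
  proof -
    have "(\<Sum>g\<in>F \<union> G. e g * g xs ys) = (\<Sum>g\<in>F \<union> G. if g \<in> F then c g * g xs ys else 0)
        + (\<Sum>g\<in>F \<union> G. if g \<in> G then d g * g xs ys else 0)"
    proof -
      have "e g * g xs ys = (if g \<in> F then c g * g xs ys else 0) + (if g \<in> G then d g * g xs ys else 0)"
        for g
        by (simp add: e_def distrib_right)
      then show ?thesis by (simp add: sum.distrib[symmetric])
    qed
    also have "\<dots> = (\<Sum>g\<in>F. c g * g xs ys) + (\<Sum>g\<in>G. d g * g xs ys)"
      by (simp add: sum.inter_restrict[symmetric] F G Int_absorb1 Int_absorb2 Un_Int_eq)
    finally show ?thesis .
  qed
  then show "\<exists>F' e. finite F' \<and> F' \<subseteq> S \<and>
      (\<lambda>xs ys. f xs ys + h xs ys) = (\<lambda>xs ys. \<Sum>g\<in>F'. e g * g xs ys)"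
    using F G by (intro exI[of _ "F \<union> G"] exI[of _ e]) auto
qed

lemma cspan_lincomb:
  assumes "finite K" "\<And>k. k \<in> K \<Longrightarrow> h k \<in> cspan S"
  shows "(\<lambda>xs ys. \<Sum>k\<in>K. c k * h k xs ys) \<in> cspan S"
  using assms
proof (induction K rule: finite_induct)
  case empty
  then show ?case by (simp add: cspan_zero)
next
  case (insert k K)
  have "(\<lambda>xs ys. c k * h k xs ys + (\<Sum>k\<in>K. c k * h k xs ys)) \<in> cspan S"
    using insert by (intro cspan_add cspan_scale) auto
  then show ?case using insert by simp
qed

lemma cspan_sum:
  assumes "finite K" "\<And>k. k \<in> K \<Longrightarrow> h k \<in> cspan S"
  shows "(\<lambda>xs ys. \<Sum>k\<in>K. h k xs ys) \<in> cspan S"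
  using cspan_lincomb[OF assms, where c = "\<lambda>_. 1"] by simp

lemma cspan_linear_image:
  assumes "op_linear L" "\<And>g. g \<in> S \<Longrightarrow> L g \<in> cspan S'" "f \<in> cspan S"
  shows "L f \<in> cspan S'"
proof -
  obtain F c where F: "finite F" "F \<subseteq> S" and f: "f = (\<lambda>xs ys. \<Sum>g\<in>F. c g * g xs ys)"
    using assms(3) unfolding cspan_def by blast
  then have "L f = (\<lambda>xs ys. \<Sum>g\<in>F. c g * L g xs ys)"
    using assms(1) unfolding op_linear_def by blast
  also have "\<dots> \<in> cspan S'"
    using F assms(2) by (intro cspan_lincomb) auto
  finally show ?thesis .
qed

lemma cspan_linear_eq:
  assumes "op_linear L" "op_linear M" "\<And>g. g \<in> S \<Longrightarrow> L g = M g" "f \<in> cspan S"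
  shows "L f = M f"
proof -
  obtain F c where F: "finite F" "F \<subseteq> S" and f: "f = (\<lambda>xs ys. \<Sum>g\<in>F. c g * g xs ys)"
    using assms(4) unfolding cspan_def by blast
  have "L f = (\<lambda>xs ys. \<Sum>g\<in>F. c g * L g xs ys)"
    using assms(1) F f unfolding op_linear_def by blast
  also have "\<dots> = (\<lambda>xs ys. \<Sum>g\<in>F. c g * M g xs ys)"
    by (intro ext sum.cong refl) (use F assms(3) in auto)
  also have "\<dots> = M f"
    using assms(2) F f unfolding op_linear_def by simp
  finally show ?thesis .
qed

lemma op_linear_id: "op_linear (\<lambda>X. X)"
  by (simp add: op_linear_def)

lemma op_linear_zero: "op_linear (\<lambda>X _ _. 0)"
  by (simp add: op_linear_def)

lemma optens_cong: "(\<And>i. i < n \<Longrightarrow> A i = B i) \<Longrightarrow> optens n A = optens n B"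
  unfolding optens_def by (intro ext) auto

lemma optens_outside: "xs \<notin> idx n \<or> ys \<notin> idx n \<Longrightarrow> optens n A xs ys = 0"
  unfolding optens_def by auto

lemma optens_scale: "optens n (\<lambda>i a b. c i * A i a b) = (\<lambda>xs ys. (\<Prod>i<n. c i) * optens n A xs ys)"
  unfolding optens_def by (intro ext) (simp add: prod.distrib)

lemma optens_zero_factor:
  assumes "i < n" "A i = (\<lambda>a b. 0)"
  shows "optens n A = (\<lambda>_ _. 0)"
proof (intro ext)
  fix xs ys
  have "A i (xs ! i) (ys ! i) = 0" using assms(2) by simp
  then show "optens n A xs ys = 0"
    unfolding optens_def using assms(1) by (auto intro!: prod_zero)
qed

lemma kernel_map_optens:
  assumes K: "\<And>xs ys xs' ys'. xs' \<in> idx n \<Longrightarrow> ys' \<in> idx n \<Longrightarrow> K xs ys xs' ys'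
     = (if xs \<in> idx n \<and> ys \<in> idx n then \<Prod>i<n. k i (xs ! i) (ys ! i) (xs' ! i) (ys' ! i) else 0)"
  shows "kernel_map n K (optens n A) = optens n (\<lambda>i x y. \<Sum>a\<in>UNIV. \<Sum>b\<in>UNIV. k i x y a b * A i a b)"
proof (intro ext)
  fix xs ys
  show "kernel_map n K (optens n A) xs ys
      = optens n (\<lambda>i x y. \<Sum>a\<in>UNIV. \<Sum>b\<in>UNIV. k i x y a b * A i a b) xs ys"
  proof (cases "xs \<in> idx n \<and> ys \<in> idx n")
    case True
    have "kernel_map n K (optens n A) xs ys = (\<Sum>xs'\<in>idx n. \<Sum>ys'\<in>idx n.
        \<Prod>i<n. k i (xs ! i) (ys ! i) (xs' ! i) (ys' ! i) * A i (xs' ! i) (ys' ! i))"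
      unfolding kernel_map_def using True by (intro sum.cong refl) (simp add: K optens_def prod.distrib)
    then show ?thesis
      using True sum2_idx_prod[where g = "\<lambda>i a b. k i (xs ! i) (ys ! i) a b * A i a b"]
      by (simp add: optens_def)
  next
    case False
    then show ?thesis by (auto simp: kernel_map_def K optens_outside intro!: sum.neutral)
  qed
qed

lemma optens_expand:
  assumes S: "S \<subseteq> {..<n}" and A: "\<And>i. i \<in> S \<Longrightarrow> A i = (\<lambda>a b. B i a b + C i a b)"
  shows "optens n A
    = (\<lambda>xs ys. \<Sum>T\<in>Pow S. optens n (\<lambda>i. if i \<in> T then C i else if i \<in> S then B i else A i) xs ys)"
proof (intro ext)
  fix xs ys
  show "optens n A xs ys
    = (\<Sum>T\<in>Pow S. optens n (\<lambda>i. if i \<in> T then C i else if i \<in> S then B i else A i) xs ys)"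
  proof (cases "xs \<in> idx n \<and> ys \<in> idx n")
    case False
    then show ?thesis by (simp add: optens_outside)
  next
    case True
    let ?a = "\<lambda>i. A i (xs ! i) (ys ! i)" and ?b = "\<lambda>i. B i (xs ! i) (ys ! i)"
      and ?c = "\<lambda>i. C i (xs ! i) (ys ! i)"
    have fS: "finite S" using S finite_subset by blast
    have "optens n A xs ys = (\<Prod>i\<in>S. ?c i + ?b i) * (\<Prod>i\<in>{..<n} - S. ?a i)"
      using True fS S A by (simp add: optens_def prod.subset_diff[OF S] add.commute)
    also have "\<dots> = (\<Sum>T\<in>Pow S. (\<Prod>i\<in>T. ?c i) * (\<Prod>i\<in>S - T. ?b i) * (\<Prod>i\<in>{..<n} - S. ?a i))"
      by (simp add: prod_add[OF fS] sum_distrib_right)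
    also have "\<dots> = (\<Sum>T\<in>Pow S. optens n (\<lambda>i. if i \<in> T then C i else if i \<in> S then B i else A i) xs ys)"
    proof (intro sum.cong refl)
      fix T assume T: "T \<in> Pow S"
      have e: "{..<n} \<inter> T = T" "{..<n} \<inter> - T \<inter> S = S - T" "{..<n} \<inter> - T \<inter> - S = {..<n} - S"
        using T S by auto
      show "(\<Prod>i\<in>T. ?c i) * (\<Prod>i\<in>S - T. ?b i) * (\<Prod>i\<in>{..<n} - S. ?a i)
          = optens n (\<lambda>i. if i \<in> T then C i else if i \<in> S then B i else A i) xs ys"
        using True by (simp add: optens_def if_distrib[of "\<lambda>M. M _ _"] prod.If_cases e
            Int_assoc[symmetric] mult.assoc)
    qed
    finally show ?thesis .
  qed
qed

section \<open>Bloch components as projections\<close>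

definition trace_part :: "m2 \<Rightarrow> m2" where
  "trace_part A = (\<lambda>a b. if a = b then (A False False + A True True) / 2 else 0)"

definition traceless_part :: "m2 \<Rightarrow> m2" where
  "traceless_part A = (\<lambda>a b. A a b - trace_part A a b)"

definition matrix_unit :: "bool \<Rightarrow> bool \<Rightarrow> m2" where
  "matrix_unit a' b' = (\<lambda>a b. if a = a' \<and> b = b' then 1 else 0)"

definition bloch_kernel :: "nat set \<Rightarrow> bool list \<Rightarrow> bool list \<Rightarrow> nat \<Rightarrow> m2" where
  "bloch_kernel J xs' ys' = (\<lambda>i. if i \<in> J then traceless_part (matrix_unit (xs' ! i) (ys' ! i))
                                 else trace_part (matrix_unit (xs' ! i) (ys' ! i)))"

definition bloch_proj :: "nat \<Rightarrow> nat set \<Rightarrow> op \<Rightarrow> op" where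
  "bloch_proj n J = kernel_map n (\<lambda>xs ys xs' ys'. optens n (bloch_kernel J xs' ys') xs ys)"

lemma trace_part_eq_matrix_units:
  "trace_part A x y = (\<Sum>a\<in>UNIV. \<Sum>b\<in>UNIV. trace_part (matrix_unit a b) x y * A a b)"
  by (cases x; cases y) (simp_all add: sum_UNIV_bool trace_part_def matrix_unit_def)

lemma traceless_part_eq_matrix_units:
  "traceless_part A x y = (\<Sum>a\<in>UNIV. \<Sum>b\<in>UNIV. traceless_part (matrix_unit a b) x y * A a b)"
  by (cases x; cases y)
    (simp_all add: sum_UNIV_bool trace_part_def traceless_part_def matrix_unit_def field_simps)

lemma trace_part_id2 [simp]: "trace_part id2 = id2"
  by (auto simp: trace_part_def id2_def intro!: ext)

lemma traceless_part_id2 [simp]: "traceless_part id2 = (\<lambda>a b. 0)"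
  by (auto simp: traceless_part_def trace_part_def id2_def intro!: ext)

lemma trace_part_sl2: "A \<in> sl2 \<Longrightarrow> trace_part A = (\<lambda>a b. 0)"
  by (auto simp: trace_part_def sl2_def intro!: ext)

lemma traceless_part_sl2: "A \<in> sl2 \<Longrightarrow> traceless_part A = A"
  by (simp add: traceless_part_def trace_part_sl2)

lemma traceless_part_in_sl2: "traceless_part A \<in> sl2"
  by (simp add: sl2_def traceless_part_def trace_part_def)

lemma trace_part_matrix_unit:
  "trace_part (matrix_unit a b) = (\<lambda>x y. ((if a = b then 1 else 0) / 2) * id2 x y)"
  by (auto simp: trace_part_def matrix_unit_def id2_def intro!: ext)

lemma bloch_proj_optens:
  "bloch_proj n J (optens n A) = optens n (\<lambda>i. if i \<in> J then traceless_part (A i) else trace_part (A i))"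
proof -
  have "bloch_proj n J (optens n A) = optens n (\<lambda>i x y. \<Sum>a\<in>UNIV. \<Sum>b\<in>UNIV.
        (if i \<in> J then traceless_part (matrix_unit a b) else trace_part (matrix_unit a b)) x y * A i a b)"
    unfolding bloch_proj_def by (rule kernel_map_optens) (simp add: optens_def bloch_kernel_def)
  also have "\<dots> = optens n (\<lambda>i. if i \<in> J then traceless_part (A i) else trace_part (A i))"
    by (intro optens_cong ext)
      (simp add: trace_part_eq_matrix_units[symmetric] traceless_part_eq_matrix_units[symmetric])
  finally show ?thesis .
qed

lemma optens_matrix_unit:
  assumes "xs' \<in> idx n" "ys' \<in> idx n"
  shows "optens n (\<lambda>i. matrix_unit (xs' ! i) (ys' ! i)) xs ys = (if xs = xs' \<and> ys = ys' then 1 else 0)"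
proof (cases "xs \<in> idx n \<and> ys \<in> idx n")
  case True
  then show ?thesis
    using assms nth_eq_iff_idx[of xs n xs'] nth_eq_iff_idx[of ys n ys']
    by (auto simp: optens_def matrix_unit_def prod_indicator)
next
  case False
  then show ?thesis using assms by (auto simp: optens_def)
qed

lemma sum_bloch_kernel:
  assumes "xs' \<in> idx n" "ys' \<in> idx n"
  shows "(\<Sum>J\<in>Pow {..<n}. optens n (bloch_kernel J xs' ys') xs ys) = (if xs = xs' \<and> ys = ys' then 1 else 0)"
proof -
  have "optens n (\<lambda>i. matrix_unit (xs' ! i) (ys' ! i)) = (\<lambda>xs ys. \<Sum>J\<in>Pow {..<n}. optens n
      (\<lambda>i. if i \<in> J then traceless_part (matrix_unit (xs' ! i) (ys' ! i))
           else if i \<in> {..<n} then trace_part (matrix_unit (xs' ! i) (ys' ! i))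
           else matrix_unit (xs' ! i) (ys' ! i)) xs ys)"
    by (rule optens_expand) (simp_all add: traceless_part_def)
  also have "\<dots> = (\<lambda>xs ys. \<Sum>J\<in>Pow {..<n}. optens n (bloch_kernel J xs' ys') xs ys)"
  proof -
    have "optens n (\<lambda>i. if i \<in> J then traceless_part (matrix_unit (xs' ! i) (ys' ! i))
           else if i \<in> {..<n} then trace_part (matrix_unit (xs' ! i) (ys' ! i))
           else matrix_unit (xs' ! i) (ys' ! i)) = optens n (bloch_kernel J xs' ys')" for J
      by (rule optens_cong) (simp add: bloch_kernel_def)
    then show ?thesis by simp
  qed
  finally have "optens n (\<lambda>i. matrix_unit (xs' ! i) (ys' ! i)) xs ys
      = (\<Sum>J\<in>Pow {..<n}. optens n (bloch_kernel J xs' ys') xs ys)"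
    by simp
  then show ?thesis
    using optens_matrix_unit[OF assms] by simp
qed

lemma sum_bloch_proj:
  assumes X: "\<And>xs ys. xs \<notin> idx n \<or> ys \<notin> idx n \<Longrightarrow> X xs ys = 0"
  shows "(\<lambda>xs ys. \<Sum>J\<in>Pow {..<n}. bloch_proj n J X xs ys) = X"
proof (intro ext)
  fix xs ys
  have "(\<Sum>J\<in>Pow {..<n}. bloch_proj n J X xs ys)
      = (\<Sum>xs'\<in>idx n. \<Sum>ys'\<in>idx n. (\<Sum>J\<in>Pow {..<n}. optens n (bloch_kernel J xs' ys') xs ys) * X xs' ys')"
    unfolding bloch_proj_def kernel_map_def sum_distrib_right
    by (subst sum.swap, rule sum.cong[OF refl], rule sum.swap)
  also have "\<dots> = (\<Sum>xs'\<in>idx n. \<Sum>ys'\<in>idx n. if xs' = xs then if ys' = ys then X xs ys else 0 else 0)"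
    by (intro sum.cong refl) (subst sum_bloch_kernel; auto)
  also have "\<dots> = (\<Sum>xs'\<in>idx n. if xs' = xs \<and> ys \<in> idx n then X xs ys else 0)"
  proof -
    have "(\<Sum>ys'\<in>idx n. if xs' = xs then if ys' = ys then c else 0 else 0)
        = (if xs' = xs \<and> ys \<in> idx n then c else 0)" for xs' and c :: complex
      by (cases "xs' = xs") simp_all
    then show ?thesis by simp
  qed
  also have "\<dots> = X xs ys"
    using X[of xs ys] by (cases "ys \<in> idx n") simp_all
  finally show "(\<Sum>J\<in>Pow {..<n}. bloch_proj n J X xs ys) = X xs ys" .
qed

lemma bloch_proj_empty: "bloch_proj n {} X = (\<lambda>xs ys. trace_op n X * idop n xs ys / 2 ^ n)"
proof (intro ext)
  fix xs ys
  have kernel: "optens n (bloch_kernel {} xs' ys') xs ys = (if xs' = ys' then idop n xs ys / 2 ^ n else 0)"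
    if "xs' \<in> idx n" "ys' \<in> idx n" for xs' ys'
  proof -
    have "optens n (bloch_kernel {} xs' ys')
        = optens n (\<lambda>i x y. ((if xs' ! i = ys' ! i then 1 else 0) / 2) * id2 x y)"
      by (rule optens_cong) (simp add: bloch_kernel_def trace_part_matrix_unit)
    also have "\<dots> = (\<lambda>xs ys. (\<Prod>i<n. (if xs' ! i = ys' ! i then 1 else 0) / 2) * idop n xs ys)"
      unfolding idop_def by (rule optens_scale)
    finally show ?thesis
      using that by (simp add: prod_dividef prod_indicator nth_eq_iff_idx[OF that, symmetric])
  qed
  have "bloch_proj n {} X xs ys = (\<Sum>xs'\<in>idx n. \<Sum>ys'\<in>idx n. if ys' = xs' then X xs' xs' * (idop n xs ys / 2 ^ n) else 0)"
    unfolding bloch_proj_def kernel_map_def by (intro sum.cong refl) (auto simp: kernel)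
  then show "bloch_proj n {} X xs ys = trace_op n X * idop n xs ys / 2 ^ n"
    by (simp add: sum.delta sum_distrib_right sum_divide_distrib trace_op_def)
qed

definition VI_gens :: "nat \<Rightarrow> nat set \<Rightarrow> op set" where
  "VI_gens n I = {optens n A | A. (\<forall>i\<in>I. A i \<in> sl2) \<and> (\<forall>i<n. i \<notin> I \<longrightarrow> A i = id2)}"

lemma VI_eq_cspan: "VI n I = cspan (VI_gens n I)"
  by (simp add: VI_def VI_gens_def)

lemma Isets_subset: "I \<in> Isets n \<Longrightarrow> I \<subseteq> {..<n}"
  by (simp add: Isets_def)

lemma finite_Isets [simp]: "finite (Isets n)"
  by (simp add: Isets_def)

lemma Pow_eq_insert_Isets: "Pow {..<n} = insert {} (Isets n)"
  by (auto simp: Isets_def)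

lemma bloch_proj_in_VI: "bloch_proj n J X \<in> VI n J"
proof -
  define G where "G xs' ys' i = (if i \<in> J then traceless_part (matrix_unit (xs' ! i) (ys' ! i)) else id2)"
    for xs' ys' :: "bool list" and i
  define c where "c xs' ys' i = (if i \<in> J then 1 else (if xs' ! i = ys' ! i then 1 else 0) / (2::complex))"
    for xs' ys' :: "bool list" and i
  have "bloch_kernel J xs' ys' = (\<lambda>i a b. c xs' ys' i * G xs' ys' i a b)" for xs' ys'
    by (auto simp: bloch_kernel_def G_def c_def trace_part_matrix_unit)
  then have "bloch_proj n J X = (\<lambda>xs ys. \<Sum>xs'\<in>idx n. \<Sum>ys'\<in>idx n.
      (X xs' ys' * (\<Prod>i<n. c xs' ys' i)) * optens n (G xs' ys') xs ys)"
    by (simp add: bloch_proj_def kernel_map_def optens_scale mult_ac)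
  also have "\<dots> \<in> VI n J"
    unfolding VI_eq_cspan
    by (intro cspan_sum finite_idx cspan_lincomb cspan_base)
      (auto simp: VI_gens_def G_def traceless_part_in_sl2)
  finally show ?thesis .
qed

lemma bloch_proj_VI_same: "f \<in> VI n J \<Longrightarrow> bloch_proj n J f = f"
  unfolding VI_eq_cspan
proof (rule cspan_linear_eq[OF _ op_linear_id])
  show "op_linear (bloch_proj n J)"
    unfolding bloch_proj_def by (rule op_linear_kernel_map)
  fix g assume "g \<in> VI_gens n J"
  then obtain A where g: "g = optens n A" and A: "\<forall>i\<in>J. A i \<in> sl2" "\<forall>i<n. i \<notin> J \<longrightarrow> A i = id2"
    by (auto simp: VI_gens_def)
  show "bloch_proj n J g = g"
    unfolding g bloch_proj_optens by (rule optens_cong) (use A in \<open>auto simp: traceless_part_sl2\<close>)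
qed

lemma bloch_proj_VI_other:
  assumes "I \<subseteq> {..<n}" "J \<subseteq> {..<n}" "I \<noteq> J" "f \<in> VI n I"
  shows "bloch_proj n J f = (\<lambda>_ _. 0)"
  using assms(4) unfolding VI_eq_cspan
proof (rule cspan_linear_eq[OF _ op_linear_zero, rotated 2])
  show "op_linear (bloch_proj n J)"
    unfolding bloch_proj_def by (rule op_linear_kernel_map)
  fix g assume "g \<in> VI_gens n I"
  then obtain A where g: "g = optens n A" and A: "\<forall>i\<in>I. A i \<in> sl2" "\<forall>i<n. i \<notin> I \<longrightarrow> A i = id2"
    by (auto simp: VI_gens_def)
  obtain i where i: "i < n" "i \<in> I \<and> i \<notin> J \<or> i \<in> J \<and> i \<notin> I"
    using assms(1-3) by blast
  show "bloch_proj n J g = (\<lambda>_ _. 0)"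
    unfolding g bloch_proj_optens
    by (rule optens_zero_factor[OF i(1)]) (use A i in \<open>auto simp: trace_part_sl2\<close>)
qed

lemma bloch_proj_idop:
  assumes "J \<noteq> {}" "J \<subseteq> {..<n}"
  shows "bloch_proj n J (idop n) = (\<lambda>_ _. 0)"
proof -
  obtain i where "i \<in> J" using assms(1) by blast
  then show ?thesis
    unfolding idop_def bloch_proj_optens using assms(2) by (intro optens_zero_factor[of i]) auto
qed

lemma bloch_proj_bloch_form:
  assumes f: "\<forall>I\<in>Isets n. f I \<in> VI n I" and J: "J \<in> Isets n"
  shows "bloch_proj n J (\<lambda>xs ys. idop n xs ys / 2 ^ n + (\<Sum>I\<in>Isets n. f I xs ys)) = f J"
proof -
  have idop: "bloch_proj n J (idop n) = (\<lambda>_ _. 0)"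
    using J by (intro bloch_proj_idop) (auto simp: Isets_def)
  have f_J: "bloch_proj n J (f I) xs ys = (if I = J then f J xs ys else 0)" if "I \<in> Isets n" for I xs ys
    using that J f bloch_proj_VI_same bloch_proj_VI_other[OF Isets_subset Isets_subset] by auto
  have "bloch_proj n J (\<lambda>xs ys. idop n xs ys / 2 ^ n + (\<Sum>I\<in>Isets n. f I xs ys))
      = (\<lambda>xs ys. bloch_proj n J (idop n) xs ys / 2 ^ n + (\<Sum>I\<in>Isets n. bloch_proj n J (f I) xs ys))"
    unfolding bloch_proj_def by (rule kernel_map_bloch_form)
  also have "\<dots> = (\<lambda>xs ys. \<Sum>I\<in>Isets n. if I = J then f J xs ys else 0)"
    by (simp add: idop f_J cong: sum.cong)
  also have "\<dots> = f J"
    using J by (simp add: sum.delta')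
  finally show ?thesis .
qed

lemma bloch_proj_decomp:
  assumes "\<rho> \<in> Lset n"
  shows "\<rho> = (\<lambda>xs ys. idop n xs ys / 2 ^ n + (\<Sum>I\<in>Isets n. bloch_proj n I \<rho> xs ys))"
proof -
  have "\<rho> = (\<lambda>xs ys. \<Sum>J\<in>Pow {..<n}. bloch_proj n J \<rho> xs ys)"
    by (rule sum_bloch_proj[symmetric]) (use assms in \<open>simp add: Lset_def\<close>)
  also have "\<dots> = (\<lambda>xs ys. idop n xs ys / 2 ^ n + (\<Sum>I\<in>Isets n. bloch_proj n I \<rho> xs ys))"
    using assms unfolding Pow_eq_insert_Isets
    by (subst sum.insert) (auto simp: Isets_def bloch_proj_empty Lset_def)
  finally show ?thesis .
qed

lemma bloch_eq_proj:
  assumes "\<rho> \<in> Lset n"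
  shows "bloch n \<rho> = (\<lambda>I. if I \<in> Isets n then bloch_proj n I \<rho> else (\<lambda>_ _. 0))"
  unfolding bloch_def
proof (rule the_equality)
  show "(\<forall>I\<in>Isets n. (if I \<in> Isets n then bloch_proj n I \<rho> else (\<lambda>_ _. 0)) \<in> VI n I) \<and>
      (\<forall>I. I \<notin> Isets n \<longrightarrow> (if I \<in> Isets n then bloch_proj n I \<rho> else (\<lambda>_ _. 0)) = (\<lambda>_ _. 0)) \<and>
      \<rho> = (\<lambda>xs ys. idop n xs ys / 2 ^ n
             + (\<Sum>I\<in>Isets n. (if I \<in> Isets n then bloch_proj n I \<rho> else (\<lambda>_ _. 0)) xs ys))"
    using bloch_proj_decomp[OF assms] by (simp add: bloch_proj_in_VI cong: sum.cong)
next
  fix f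
  assume "(\<forall>I\<in>Isets n. f I \<in> VI n I) \<and> (\<forall>I. I \<notin> Isets n \<longrightarrow> f I = (\<lambda>_ _. 0)) \<and>
    \<rho> = (\<lambda>xs ys. idop n xs ys / 2 ^ n + (\<Sum>I\<in>Isets n. f I xs ys))"
  then show "f = (\<lambda>I. if I \<in> Isets n then bloch_proj n I \<rho> else (\<lambda>_ _. 0))"
    using bloch_proj_bloch_form[of n f] by auto
qed

lemma bloch_in_VI: "\<rho> \<in> Lset n \<Longrightarrow> I \<in> Isets n \<Longrightarrow> bloch n \<rho> I \<in> VI n I"
  by (simp add: bloch_eq_proj bloch_proj_in_VI)

lemma bloch_decomp:
  "\<rho> \<in> Lset n \<Longrightarrow> \<rho> = (\<lambda>xs ys. idop n xs ys / 2 ^ n + (\<Sum>I\<in>Isets n. bloch n \<rho> I xs ys))"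
  using bloch_proj_decomp by (simp add: bloch_eq_proj cong: sum.cong)

lemma bloch_unique:
  assumes "\<rho> \<in> Lset n" "\<forall>I\<in>Isets n. f I \<in> VI n I"
    and "\<rho> = (\<lambda>xs ys. idop n xs ys / 2 ^ n + (\<Sum>I\<in>Isets n. f I xs ys))" "I \<in> Isets n"
  shows "bloch n \<rho> I = f I"
proof -
  have "bloch n \<rho> I = bloch_proj n I \<rho>"
    using assms(4) by (simp add: bloch_eq_proj[OF assms(1)])
  also have "\<dots> = f I"
    using bloch_proj_bloch_form[OF assms(2,4)] assms(3) by simp
  finally show ?thesis .
qed

definition m2_mult :: "m2 \<Rightarrow> m2 \<Rightarrow> m2" where
  "m2_mult A B = (\<lambda>a b. \<Sum>c\<in>UNIV. A a c * B c b)"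

definition reflection :: "m2 \<Rightarrow> bool" where
  "reflection w \<longleftrightarrow> w \<in> sl2 \<and> m2_mult w w = id2"

definition reflection_sys :: "nat \<Rightarrow> (nat \<Rightarrow> m2) \<Rightarrow> bool" where
  "reflection_sys n v \<longleftrightarrow> (\<forall>i<n. reflection (v i))"

lemma m2_eqI:
  fixes f g :: m2
  assumes "f False False = g False False" "f False True = g False True"
    "f True False = g True False" "f True True = g True True"
  shows "f = g"
proof (intro ext)
  fix a b show "f a b = g a b" using assms by (cases a; cases b) auto
qed

lemma sl2_entries: "A \<in> sl2 \<Longrightarrow> A True True = - A False False"
  by (simp add: sl2_def add_eq_0_iff)

lemma reflection_entries:
  assumes "reflection w"
  shows "w True True = - w False False" "w False False * w False False + w False True * w True False = 1"
proof -
  show "w True True = - w False False"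
    using assms by (simp add: reflection_def sl2_entries)
  have "m2_mult w w False False = 1"
    using assms by (simp add: reflection_def id2_def)
  then show "w False False * w False False + w False True * w True False = 1"
    by (simp add: m2_mult_def sum_UNIV_bool)
qed

lemma form2_reflection_self: "reflection w \<Longrightarrow> form2 w w = 1"
  using reflection_entries[of w] by (simp add: form2_def sum_UNIV_bool) algebra

lemma reflection_conj_id2: "reflection w \<Longrightarrow> m2_mult w (m2_mult id2 w) = id2"
proof -
  assume "reflection w"
  moreover have "m2_mult id2 w = w"
    by (intro ext) (simp add: m2_mult_def id2_def sum_UNIV_bool)
  ultimately show ?thesis by (simp add: reflection_def)
qed

lemma reflection_conj_sl2: "reflection w \<Longrightarrow> A \<in> sl2 \<Longrightarrow> m2_mult w (m2_mult A w) \<in> sl2"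
  using reflection_entries[of w] sl2_entries[of A]
  by (simp add: sl2_def m2_mult_def sum_UNIV_bool algebra_simps)

lemma reflection_conj_long:
  assumes "reflection w"
  shows "m2_mult w (m2_mult (\<lambda>a b. c * w a b) w) = (\<lambda>a b. c * w a b)"
  using reflection_entries[OF assms]
  by (intro m2_eqI) (simp_all add: m2_mult_def sum_UNIV_bool, algebra+)

lemma reflection_conj_trans:
  assumes w: "reflection w" and t: "t \<in> trans_space w"
  shows "m2_mult w (m2_mult t w) = (\<lambda>a b. - t a b)"
proof -
  have "t \<in> sl2" "form2 t (\<lambda>a b. 1 * w a b) = 0"
    using t unfolding trans_space_def long_line_def by blast+
  then have "t True True = - t False False"
    "t False False * w False False + t False True * w True False
     + t True False * w False True + t True True * w True True = 0"
    by (simp add: sl2_entries, simp add: form2_def sum_UNIV_bool add.assoc)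
  then show ?thesis
    using reflection_entries[OF w]
    by (intro m2_eqI) (simp_all add: m2_mult_def sum_UNIV_bool, algebra+)
qed

lemma sl2_minus_long_in_trans:
  assumes "reflection w" "A \<in> sl2"
  shows "(\<lambda>a b. A a b - form2 A w * w a b) \<in> trans_space w"
proof -
  note entries = reflection_entries[OF assms(1)] sl2_entries[OF assms(2)]
  have "(\<lambda>a b. A a b - form2 A w * w a b) \<in> sl2"
    using entries by (simp add: sl2_def)
  moreover have "form2 (\<lambda>a b. A a b - form2 A w * w a b) (\<lambda>a b. c * w a b) = 0" for c
    using entries by (simp add: form2_def sum_UNIV_bool) algebra
  ultimately show ?thesis by (auto simp: trans_space_def long_line_def)
qed

section \<open>Conjugation by the parity operator\<close>

text \<open>\<open>parity_conj n v X\<close> is \<open>Z X Z\<close> for \<open>Z = optens n v\<close>; if \<open>v\<close> consists of reflections,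
  then \<open>Z\<close> is \<open>+1\<close> on the even and \<open>-1\<close> on the odd basis tensors of their eigenbases.\<close>

definition parity_conj :: "nat \<Rightarrow> (nat \<Rightarrow> m2) \<Rightarrow> op \<Rightarrow> op" where
  "parity_conj n v = kernel_map n (\<lambda>xs ys xs' ys'. optens n v xs xs' * optens n v ys' ys)"

lemma op_linear_parity_conj: "op_linear (parity_conj n v)"
  unfolding parity_conj_def by (rule op_linear_kernel_map)

lemma parity_conj_optens:
  "parity_conj n v (optens n A) = optens n (\<lambda>i. m2_mult (v i) (m2_mult (A i) (v i)))"
proof -
  have "parity_conj n v (optens n A)
      = optens n (\<lambda>i x y. \<Sum>a\<in>UNIV. \<Sum>b\<in>UNIV. (v i x a * v i b y) * A i a b)"
    unfolding parity_conj_def by (rule kernel_map_optens) (auto simp: optens_def prod.distrib)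
  also have "\<dots> = optens n (\<lambda>i. m2_mult (v i) (m2_mult (A i) (v i)))"
    by (intro optens_cong ext) (simp add: m2_mult_def sum_UNIV_bool algebra_simps)
  finally show ?thesis .
qed

lemma parity_conj_idop: "reflection_sys n v \<Longrightarrow> parity_conj n v (idop n) = idop n"
  unfolding idop_def parity_conj_optens
  by (rule optens_cong) (auto simp: reflection_sys_def reflection_conj_id2)

lemma prod_neg_one_indicator:
  "T \<subseteq> {..<(n::nat)} \<Longrightarrow> (\<Prod>i<n. if i \<in> T then -1 else 1 :: complex) = (-1) ^ card T"
  by (simp add: prod.If_cases Int_absorb1)

lemma parity_conj_optens_sign:
  assumes v: "reflection_sys n v" and I: "I \<subseteq> {..<n}" and T: "T \<subseteq> I"
    and A_out: "\<forall>i<n. i \<notin> I \<longrightarrow> A i = id2"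
    and A_in: "\<forall>i\<in>I. (i \<in> T \<longrightarrow> A i \<in> trans_space (v i)) \<and> (i \<notin> T \<longrightarrow> A i \<in> long_line (v i))"
  shows "parity_conj n v (optens n A) = (\<lambda>xs ys. (-1) ^ card T * optens n A xs ys)"
proof -
  have "parity_conj n v (optens n A) = optens n (\<lambda>i a b. (if i \<in> T then -1 else 1) * A i a b)"
    unfolding parity_conj_optens
  proof (rule optens_cong)
    fix i assume i: "i < n"
    then have vi: "reflection (v i)" using v by (simp add: reflection_sys_def)
    consider "i \<notin> I" | "i \<in> T" | "i \<in> I - T" by blast
    then show "m2_mult (v i) (m2_mult (A i) (v i)) = (\<lambda>a b. (if i \<in> T then -1 else 1) * A i a b)"
    proof cases
      case 1
      then show ?thesis using A_out i T reflection_conj_id2[OF vi] by auto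
    next
      case 2
      then show ?thesis using A_in T reflection_conj_trans[OF vi] by auto
    next
      case 3
      then obtain c where "A i = (\<lambda>a b. c * v i a b)" using A_in by (auto simp: long_line_def)
      then show ?thesis using 3 reflection_conj_long[OF vi] by simp
    qed
  qed
  also have "\<dots> = (\<lambda>xs ys. (-1) ^ card T * optens n A xs ys)"
    using T I by (simp add: optens_scale prod_neg_one_indicator)
  finally show ?thesis .
qed

definition VIe_gens :: "nat \<Rightarrow> (nat \<Rightarrow> m2) \<Rightarrow> nat set \<Rightarrow> op set" where
  "VIe_gens n v I = {optens n A | A. (\<forall>i<n. i \<notin> I \<longrightarrow> A i = id2) \<and>
      (\<exists>T\<subseteq>I. even (card T) \<and> (\<forall>i\<in>I. (i \<in> T \<longrightarrow> A i \<in> trans_space (v i)) \<and>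
                                         (i \<notin> T \<longrightarrow> A i \<in> long_line (v i))))}"

lemma VIe_eq_cspan: "VIe n v I = cspan (VIe_gens n v I)"
  by (simp add: VIe_def VIe_gens_def)

lemma parity_conj_VIe:
  assumes v: "reflection_sys n v" and I: "I \<subseteq> {..<n}" and f: "f \<in> VIe n v I"
  shows "parity_conj n v f = f"
  using f unfolding VIe_eq_cspan
proof (rule cspan_linear_eq[OF op_linear_parity_conj op_linear_id, rotated])
  fix g assume "g \<in> VIe_gens n v I"
  then obtain A T where g: "g = optens n A" and A_out: "\<forall>i<n. i \<notin> I \<longrightarrow> A i = id2"
    and T: "T \<subseteq> I" "even (card T)"
    and A_in: "\<forall>i\<in>I. (i \<in> T \<longrightarrow> A i \<in> trans_space (v i)) \<and> (i \<notin> T \<longrightarrow> A i \<in> long_line (v i))"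
    by (auto simp: VIe_gens_def)
  show "parity_conj n v g = g"
    unfolding g parity_conj_optens_sign[OF v I T(1) A_out A_in] using T(2) by simp
qed

lemma parity_conj_VI:
  assumes v: "reflection_sys n v" and I: "I \<subseteq> {..<n}" and f: "f \<in> VI n I"
  shows "parity_conj n v f \<in> VI n I"
  using f unfolding VI_eq_cspan
proof (rule cspan_linear_image[OF op_linear_parity_conj, rotated])
  fix g assume "g \<in> VI_gens n I"
  then obtain A where g: "g = optens n A" and A: "\<forall>i\<in>I. A i \<in> sl2" "\<forall>i<n. i \<notin> I \<longrightarrow> A i = id2"
    by (auto simp: VI_gens_def)
  have "parity_conj n v g \<in> VI_gens n I"
    unfolding g parity_conj_optens VI_gens_def
    using A v I by (auto simp: reflection_sys_def reflection_conj_id2 reflection_conj_sl2 subset_iff)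
  then show "parity_conj n v g \<in> cspan (VI_gens n I)"
    by (rule cspan_base)
qed

text \<open>Splitting each traceless factor into its longitudinal and transversal parts, the average
  of a generator of \<open>V\<^sub>I\<close> and its parity conjugate keeps exactly the terms with an even number
  of transversal factors.\<close>

lemma parity_avg_VI_gen:
  assumes v: "reflection_sys n v" and I: "I \<subseteq> {..<n}" and g: "g \<in> VI_gens n I"
  shows "(\<lambda>xs ys. (g xs ys + parity_conj n v g xs ys) / 2) \<in> VIe n v I"
proof -
  obtain A where g: "g = optens n A" and A: "\<forall>i\<in>I. A i \<in> sl2" "\<forall>i<n. i \<notin> I \<longrightarrow> A i = id2"
    using assms by (auto simp: VI_gens_def)
  have vi: "reflection (v i)" if "i \<in> I" for i
    using v I that by (auto simp: reflection_sys_def)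
  have fin: "finite (Pow I)"
    using I finite_subset by blast
  define AT where "AT T = (\<lambda>i. if i \<in> T then (\<lambda>a b. A i a b - form2 (A i) (v i) * v i a b)
      else if i \<in> I then (\<lambda>a b. form2 (A i) (v i) * v i a b) else A i)" for T
  have expand: "optens n A = (\<lambda>xs ys. \<Sum>T\<in>Pow I. optens n (AT T) xs ys)"
    unfolding AT_def by (rule optens_expand[OF I]) auto
  have AT_out: "\<forall>i<n. i \<notin> I \<longrightarrow> AT T i = id2" if "T \<subseteq> I" for T
    using A that by (auto simp: AT_def)
  have AT_in: "\<forall>i\<in>I. (i \<in> T \<longrightarrow> AT T i \<in> trans_space (v i)) \<and> (i \<notin> T \<longrightarrow> AT T i \<in> long_line (v i))"
    if "T \<subseteq> I" for T
    using that A vi by (auto simp: AT_def long_line_def intro!: sl2_minus_long_in_trans)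
  have "parity_conj n v g = (\<lambda>xs ys. \<Sum>T\<in>Pow I. parity_conj n v (optens n (AT T)) xs ys)"
    unfolding g expand parity_conj_def by (rule kernel_map_sum[OF fin])
  also have "\<dots> = (\<lambda>xs ys. \<Sum>T\<in>Pow I. (-1) ^ card T * optens n (AT T) xs ys)"
    using parity_conj_optens_sign[OF v I _ AT_out AT_in] by simp
  finally have "(\<lambda>xs ys. (g xs ys + parity_conj n v g xs ys) / 2)
      = (\<lambda>xs ys. \<Sum>T\<in>Pow I. (if even (card T) then optens n (AT T) else (\<lambda>_ _. 0)) xs ys)"
    unfolding g by (subst expand)
      (auto simp: sum.distrib[symmetric] sum_divide_distrib intro!: ext sum.cong)
  also have "\<dots> \<in> VIe n v I"
    unfolding VIe_eq_cspan
  proof (rule cspan_sum[OF fin])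
    fix T assume T: "T \<in> Pow I"
    show "(if even (card T) then optens n (AT T) else (\<lambda>_ _. 0)) \<in> cspan (VIe_gens n v I)"
    proof (cases "even (card T)")
      case True
      then have "optens n (AT T) \<in> VIe_gens n v I"
        unfolding VIe_gens_def using T AT_out AT_in by blast
      then show ?thesis using True by (simp add: cspan_base)
    qed (simp add: cspan_zero)
  qed
  finally show ?thesis .
qed

lemma parity_avg_VI:
  assumes v: "reflection_sys n v" and I: "I \<subseteq> {..<n}" and f: "f \<in> VI n I"
  shows "(\<lambda>xs ys. (f xs ys + parity_conj n v f xs ys) / 2) \<in> VIe n v I"
  using f unfolding VI_eq_cspan VIe_eq_cspan
proof (rule cspan_linear_image[rotated 2])
  show "op_linear (\<lambda>f xs ys. (f xs ys + parity_conj n v f xs ys) / 2)"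
    using op_linear_parity_conj[of n v] unfolding op_linear_def
    by (auto simp: sum.distrib[symmetric] sum_divide_distrib algebra_simps)
  fix g assume "g \<in> VI_gens n I"
  then show "(\<lambda>xs ys. (g xs ys + parity_conj n v g xs ys) / 2) \<in> cspan (VIe_gens n v I)"
    using parity_avg_VI_gen[OF v I] by (simp add: VIe_eq_cspan)
qed

lemma parity_conj_fixed_iff_bloch_VIe:
  assumes v: "reflection_sys n v" and \<rho>: "\<rho> \<in> Lset n"
  shows "parity_conj n v \<rho> = \<rho> \<longleftrightarrow> (\<forall>I\<in>Isets n. bloch n \<rho> I \<in> VIe n v I)"
proof
  assume fixed: "parity_conj n v \<rho> = \<rho>"
  define f where "f I = parity_conj n v (bloch n \<rho> I)" for I
  have f_VI: "\<forall>I\<in>Isets n. f I \<in> VI n I"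
    using parity_conj_VI[OF v Isets_subset] bloch_in_VI[OF \<rho>] by (simp add: f_def)
  have "\<rho> = parity_conj n v (\<lambda>xs ys. idop n xs ys / 2 ^ n + (\<Sum>I\<in>Isets n. bloch n \<rho> I xs ys))"
    using fixed bloch_decomp[OF \<rho>] by simp
  also have "\<dots> = (\<lambda>xs ys. idop n xs ys / 2 ^ n + (\<Sum>I\<in>Isets n. f I xs ys))"
    unfolding parity_conj_def f_def kernel_map_bloch_form
    unfolding parity_conj_def[symmetric] parity_conj_idop[OF v] ..
  finally have "bloch n \<rho> I = parity_conj n v (bloch n \<rho> I)" if "I \<in> Isets n" for I
    using bloch_unique[OF \<rho> f_VI _ that] by (simp add: f_def)
  then show "\<forall>I\<in>Isets n. bloch n \<rho> I \<in> VIe n v I"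
    using parity_avg_VI[OF v Isets_subset bloch_in_VI[OF \<rho>]] by force
next
  assume "\<forall>I\<in>Isets n. bloch n \<rho> I \<in> VIe n v I"
  then have "parity_conj n v (bloch n \<rho> I) = bloch n \<rho> I" if "I \<in> Isets n" for I
    using that parity_conj_VIe[OF v Isets_subset] by blast
  then have "parity_conj n v (\<lambda>xs ys. idop n xs ys / 2 ^ n + (\<Sum>I\<in>Isets n. bloch n \<rho> I xs ys))
      = (\<lambda>xs ys. idop n xs ys / 2 ^ n + (\<Sum>I\<in>Isets n. bloch n \<rho> I xs ys))"
    unfolding parity_conj_def kernel_map_bloch_form unfolding parity_conj_def[symmetric]
    by (simp add: parity_conj_idop[OF v] cong: sum.cong)
  then show "parity_conj n v \<rho> = \<rho>"
    using bloch_decomp[OF \<rho>] by simp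
qed

section \<open>X-states as fixed points of parity conjugation\<close>

lemma opapp_lincomb:
  "finite K \<Longrightarrow> opapp n X (\<lambda>xs. \<Sum>k\<in>K. c k * w k xs) = (\<lambda>xs. \<Sum>k\<in>K. c k * opapp n X (w k) xs)"
  by (simp add: opapp_def sum_distrib_left mult_ac sum.swap[of _ K])

lemma opapp_scale: "opapp n X (\<lambda>xs. a * w xs) = (\<lambda>xs. a * opapp n X w xs)"
  by (simp add: opapp_def sum_distrib_left mult_ac)

lemma opapp_parity_conj:
  "opapp n (parity_conj n v X) w = opapp n (optens n v) (opapp n X (opapp n (optens n v) w))"
proof (intro ext)
  fix xs
  let ?Z = "optens n v"
  have "opapp n (parity_conj n v X) w xs
      = (\<Sum>ys\<in>idx n. \<Sum>xs'\<in>idx n. \<Sum>ys'\<in>idx n. ?Z xs xs' * (X xs' ys' * (?Z ys' ys * w ys)))"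
    by (simp add: opapp_def parity_conj_def kernel_map_def sum_distrib_right sum_distrib_left mult_ac)
  also have "\<dots> = (\<Sum>xs'\<in>idx n. \<Sum>ys'\<in>idx n. \<Sum>ys\<in>idx n. ?Z xs xs' * (X xs' ys' * (?Z ys' ys * w ys)))"
    by (subst sum.swap, rule sum.cong[OF refl], rule sum.swap)
  also have "\<dots> = opapp n ?Z (opapp n X (opapp n ?Z w)) xs"
    by (simp add: opapp_def sum_distrib_left)
  finally show "opapp n (parity_conj n v X) w xs = opapp n ?Z (opapp n X (opapp n ?Z w)) xs" .
qed

lemma opapp_optens_etens:
  "opapp n (optens n A) (etens n e \<phi>) = etens n (\<lambda>i c a. \<Sum>b\<in>UNIV. A i a b * e i c b) \<phi>"
proof (intro ext)
  fix xs
  show "opapp n (optens n A) (etens n e \<phi>) xs = etens n (\<lambda>i c a. \<Sum>b\<in>UNIV. A i a b * e i c b) \<phi> xs"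
  proof (cases "xs \<in> idx n")
    case True
    have "opapp n (optens n A) (etens n e \<phi>) xs
        = (\<Sum>ys\<in>idx n. \<Prod>i<n. A i (xs ! i) (ys ! i) * e i (\<phi> ! i) (ys ! i))"
      using True by (auto simp: opapp_def optens_def etens_def prod.distrib intro!: sum.cong)
    then show ?thesis
      using True sum_idx_prod[where f = "\<lambda>i b. A i (xs ! i) b * e i (\<phi> ! i) b"]
      by (simp add: etens_def)
  next
    case False
    then show ?thesis by (simp add: opapp_def optens_def etens_def)
  qed
qed

lemma etens_scale:
  "etens n (\<lambda>i c a. k i c * e i c a) \<phi> = (\<lambda>xs. (\<Prod>i<n. k i (\<phi> ! i)) * etens n e \<phi> xs)"
  by (simp add: etens_def prod.distrib fun_eq_iff)

lemma etens_cong: "(\<And>i. i < n \<Longrightarrow> e i = e' i) \<Longrightarrow> etens n e \<phi> = etens n e' \<phi>"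
  by (simp add: etens_def fun_eq_iff)

definition parity_sign :: "bool list \<Rightarrow> complex" where
  "parity_sign \<phi> = (if parity \<phi> then 1 else -1)"

lemma prod_parity_sign: "(\<Prod>i<length \<phi>. if \<phi> ! i then -1 else 1 :: complex) = parity_sign \<phi>"
proof (induction \<phi>)
  case Nil
  then show ?case by (simp add: parity_sign_def parity_def)
next
  case (Cons b \<phi>)
  have "(\<Prod>i<length (b # \<phi>). if (b # \<phi>) ! i then -1 else 1 :: complex)
      = (if b then -1 else 1) * (\<Prod>i<length \<phi>. if \<phi> ! i then -1 else 1)"
    by (simp del: prod.lessThan_Suc add: prod.lessThan_Suc_shift)
  then show ?case using Cons by (simp add: parity_sign_def parity_def)
qed

definition parity_eigenbasis :: "nat \<Rightarrow> (nat \<Rightarrow> m2) \<Rightarrow> (nat \<Rightarrow> bool \<Rightarrow> bool \<Rightarrow> complex) \<Rightarrow> bool" where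
  "parity_eigenbasis n v e \<longleftrightarrow> (\<forall>i<n. basis2 (e i False) (e i True) \<and>
     (\<forall>a c. (\<Sum>b\<in>UNIV. v i a b * e i c b) = (if c then -1 else 1) * e i c a))"

lemma opapp_parity_etens:
  assumes "parity_eigenbasis n v e" "\<phi> \<in> idx n"
  shows "opapp n (optens n v) (etens n e \<phi>) = (\<lambda>xs. parity_sign \<phi> * etens n e \<phi> xs)"
proof -
  have "opapp n (optens n v) (etens n e \<phi>) = etens n (\<lambda>i c a. (if c then -1 else 1) * e i c a) \<phi>"
    unfolding opapp_optens_etens
    by (rule etens_cong) (use assms(1) in \<open>simp add: parity_eigenbasis_def fun_eq_iff\<close>)
  also have "\<dots> = (\<lambda>xs. parity_sign \<phi> * etens n e \<phi> xs)"
    unfolding etens_scale using assms(2) prod_parity_sign[of \<phi>] by (simp add: idx_def)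
  finally show ?thesis .
qed

definition det2 :: "(bool \<Rightarrow> complex) \<Rightarrow> (bool \<Rightarrow> complex) \<Rightarrow> complex" where
  "det2 x y = x False * y True - x True * y False"

lemma basis2_det2_nonzero:
  assumes "basis2 x y"
  shows "det2 x y \<noteq> 0"
proof
  assume det: "det2 x y = 0"
  have indep: "\<And>a b. (\<forall>t. a * x t + b * y t = 0) \<Longrightarrow> a = 0 \<and> b = 0"
    using assms unfolding basis2_def by blast
  have "\<forall>t. y True * x t - x True * y t = 0" "\<forall>t. y False * x t - x False * y t = 0"
    using det by (simp_all add: det2_def all_bool_eq algebra_simps)
  then have "y True = 0 \<and> x True = 0" "y False = 0 \<and> x False = 0"
    using indep[of "y True" "- x True"] indep[of "y False" "- x False"] by auto
  then show False
    using indep[of 1 0] by (auto simp: all_bool_eq)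
qed

definition adj2 :: "(bool \<Rightarrow> complex) \<Rightarrow> (bool \<Rightarrow> complex) \<Rightarrow> m2" where
  "adj2 x y = (\<lambda>b c. if b then (if c then x False else - x True) else (if c then - y False else y True))"

lemma adj2_mult: "(\<Sum>b\<in>UNIV. (if b then y else x) a * adj2 x y b c) = (if a = c then det2 x y else 0)"
  by (cases a; cases c) (simp_all add: adj2_def sum_UNIV_bool det2_def algebra_simps)

lemma etens_dual_basis:
  assumes e: "\<forall>i<n. basis2 (e i False) (e i True)"
  obtains Q where "\<And>xs ys. xs \<in> idx n \<Longrightarrow> ys \<in> idx n \<Longrightarrow>
    (\<Sum>\<psi>\<in>idx n. (\<Prod>i<n. Q i (\<psi> ! i) (ys ! i)) * etens n e \<psi> xs) = (if ys = xs then 1 else 0)"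
proof -
  define Q where "Q i b c = adj2 (e i False) (e i True) b c / det2 (e i False) (e i True)" for i b c
  have Q: "(\<Sum>b\<in>UNIV. e i b a * Q i b c) = (if a = c then 1 else 0)" if "i < n" for i a c
  proof -
    have "(if b then e i True else e i False) = e i b" for b by simp
    then show ?thesis
      using adj2_mult[of "e i True" "e i False" a c] basis2_det2_nonzero e that
      by (simp add: Q_def sum_divide_distrib[symmetric])
  qed
  have "(\<Sum>\<psi>\<in>idx n. (\<Prod>i<n. Q i (\<psi> ! i) (ys ! i)) * etens n e \<psi> xs) = (if ys = xs then 1 else 0)"
    if xs: "xs \<in> idx n" and ys: "ys \<in> idx n" for xs ys
  proof -
    have "(\<Sum>\<psi>\<in>idx n. (\<Prod>i<n. Q i (\<psi> ! i) (ys ! i)) * etens n e \<psi> xs)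
        = (\<Sum>\<psi>\<in>idx n. \<Prod>i<n. e i (\<psi> ! i) (xs ! i) * Q i (\<psi> ! i) (ys ! i))"
      using xs by (simp add: etens_def prod.distrib mult_ac)
    also have "\<dots> = (\<Prod>i<n. if xs ! i = ys ! i then 1 else 0)"
      by (simp add: sum_idx_prod[where f = "\<lambda>i b. e i b (xs ! i) * Q i b (ys ! i)"] Q)
    also have "\<dots> = (if ys = xs then 1 else 0)"
      using xs ys nth_eq_iff_idx[of ys n xs] by (auto simp: prod_indicator)
    finally show ?thesis .
  qed
  then show ?thesis by (rule that)
qed

lemma etens_spanning:
  assumes e: "\<forall>i<n. basis2 (e i False) (e i True)" and w: "\<And>xs. xs \<notin> idx n \<Longrightarrow> w xs = 0"
  shows "\<exists>d. w = (\<lambda>xs. \<Sum>\<psi>\<in>idx n. d \<psi> * etens n e \<psi> xs)"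
proof -
  obtain Q where dual: "\<And>xs ys. xs \<in> idx n \<Longrightarrow> ys \<in> idx n \<Longrightarrow>
    (\<Sum>\<psi>\<in>idx n. (\<Prod>i<n. Q i (\<psi> ! i) (ys ! i)) * etens n e \<psi> xs) = (if ys = xs then 1 else 0)"
    using etens_dual_basis[OF e] by blast
  define d where "d \<psi> = (\<Sum>ys\<in>idx n. w ys * (\<Prod>i<n. Q i (\<psi> ! i) (ys ! i)))" for \<psi>
  have "w xs = (\<Sum>\<psi>\<in>idx n. d \<psi> * etens n e \<psi> xs)" for xs
  proof -
    have "(\<Sum>\<psi>\<in>idx n. d \<psi> * etens n e \<psi> xs)
        = (\<Sum>ys\<in>idx n. w ys * (\<Sum>\<psi>\<in>idx n. (\<Prod>i<n. Q i (\<psi> ! i) (ys ! i)) * etens n e \<psi> xs))"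
      unfolding d_def sum_distrib_right sum_distrib_left by (subst sum.swap) (simp add: mult_ac)
    also have "\<dots> = w xs"
    proof (cases "xs \<in> idx n")
      case True
      then have "(\<Sum>ys\<in>idx n. w ys * (\<Sum>\<psi>\<in>idx n. (\<Prod>i<n. Q i (\<psi> ! i) (ys ! i)) * etens n e \<psi> xs))
          = (\<Sum>ys\<in>idx n. if ys = xs then w xs else 0)"
        by (intro sum.cong refl) (simp add: dual)
      then show ?thesis using True by simp
    next
      case False
      then show ?thesis using w[of xs] by (simp add: etens_def)
    qed
    finally show ?thesis ..
  qed
  then show ?thesis by blast
qed

lemma op_eq_on_etens:
  assumes e: "\<forall>i<n. basis2 (e i False) (e i True)"
    and X: "\<And>xs ys. xs \<notin> idx n \<or> ys \<notin> idx n \<Longrightarrow> X xs ys = 0"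
    and Y: "\<And>xs ys. xs \<notin> idx n \<or> ys \<notin> idx n \<Longrightarrow> Y xs ys = 0"
    and XY: "\<And>\<phi>. \<phi> \<in> idx n \<Longrightarrow> opapp n X (etens n e \<phi>) = opapp n Y (etens n e \<phi>)"
  shows "X = Y"
proof (intro ext)
  fix xs ys
  show "X xs ys = Y xs ys"
  proof (cases "ys \<in> idx n")
    case True
    define \<delta> where "\<delta> = (\<lambda>zs. if zs = ys then 1 else (0::complex))"
    have "\<exists>d. \<delta> = (\<lambda>xs. \<Sum>\<psi>\<in>idx n. d \<psi> * etens n e \<psi> xs)"
      by (rule etens_spanning[OF e]) (use True in \<open>auto simp: \<delta>_def\<close>)
    then obtain d where d: "\<delta> = (\<lambda>xs. \<Sum>\<psi>\<in>idx n. d \<psi> * etens n e \<psi> xs)" ..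
    have column: "opapp n Z \<delta> xs = Z xs ys" for Z
    proof -
      have "opapp n Z \<delta> xs = (\<Sum>zs\<in>idx n. if zs = ys then Z xs ys else 0)"
        unfolding opapp_def \<delta>_def by (rule sum.cong) auto
      then show ?thesis using True by simp
    qed
    have "X xs ys = (\<Sum>\<psi>\<in>idx n. d \<psi> * opapp n X (etens n e \<psi>) xs)"
      unfolding column[symmetric] by (subst d) (simp add: opapp_lincomb)
    also have "\<dots> = (\<Sum>\<psi>\<in>idx n. d \<psi> * opapp n Y (etens n e \<psi>) xs)"
      by (simp add: XY)
    also have "\<dots> = Y xs ys"
      unfolding column[symmetric] by (subst d) (simp add: opapp_lincomb)
    finally show ?thesis .
  next
    case False
    then show ?thesis using X Y by auto
  qed
qed

lemma parity_conj_fixed_if_block_diag: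
  assumes e: "parity_eigenbasis n v e" and \<rho>: "\<rho> \<in> Lset n"
    and block: "\<forall>\<phi>\<in>idx n. \<exists>c. opapp n \<rho> (etens n e \<phi>) =
                  (\<lambda>xs. \<Sum>\<psi>\<in>{\<psi>\<in>idx n. parity \<psi> = parity \<phi>}. c \<psi> * etens n e \<psi> xs)"
  shows "parity_conj n v \<rho> = \<rho>"
proof (rule op_eq_on_etens)
  show "\<forall>i<n. basis2 (e i False) (e i True)"
    using e by (simp add: parity_eigenbasis_def)
  show "parity_conj n v \<rho> xs ys = 0" if "xs \<notin> idx n \<or> ys \<notin> idx n" for xs ys
    using that by (auto simp: parity_conj_def kernel_map_def optens_outside intro!: sum.neutral)
  show "\<rho> xs ys = 0" if "xs \<notin> idx n \<or> ys \<notin> idx n" for xs ys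
    using that \<rho> by (simp add: Lset_def)
  fix \<phi> assume \<phi>: "\<phi> \<in> idx n"
  let ?S = "{\<psi>\<in>idx n. parity \<psi> = parity \<phi>}"
  obtain c where c: "opapp n \<rho> (etens n e \<phi>) = (\<lambda>xs. \<Sum>\<psi>\<in>?S. c \<psi> * etens n e \<psi> xs)"
    using block \<phi> by blast
  have Z_S: "opapp n (optens n v) (etens n e \<psi>) = (\<lambda>xs. parity_sign \<phi> * etens n e \<psi> xs)" if "\<psi> \<in> ?S" for \<psi>
    using opapp_parity_etens[OF e, of \<psi>] that by (simp add: parity_sign_def)
  have "opapp n (parity_conj n v \<rho>) (etens n e \<phi>)
      = (\<lambda>xs. parity_sign \<phi> * opapp n (optens n v) (opapp n \<rho> (etens n e \<phi>)) xs)"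
    by (simp only: opapp_parity_conj opapp_parity_etens[OF e \<phi>] opapp_scale)
  also have "\<dots> = (\<lambda>xs. parity_sign \<phi> * (\<Sum>\<psi>\<in>?S. c \<psi> * (parity_sign \<phi> * etens n e \<psi> xs)))"
    unfolding c by (subst opapp_lincomb) (auto simp: Z_S intro!: sum.cong)
  also have "\<dots> = opapp n \<rho> (etens n e \<phi>)"
    unfolding c by (simp add: sum_distrib_left mult_ac parity_sign_def)
  finally show "opapp n (parity_conj n v \<rho>) (etens n e \<phi>) = opapp n \<rho> (etens n e \<phi>)" .
qed

lemma block_diag_if_parity_conj_fixed:
  assumes e: "parity_eigenbasis n v e" and \<rho>: "\<rho> \<in> Lset n" and fixed: "parity_conj n v \<rho> = \<rho>"
    and \<phi>: "\<phi> \<in> idx n"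
  shows "\<exists>c. opapp n \<rho> (etens n e \<phi>) =
           (\<lambda>xs. \<Sum>\<psi>\<in>{\<psi>\<in>idx n. parity \<psi> = parity \<phi>}. c \<psi> * etens n e \<psi> xs)"
proof -
  define w where "w = opapp n \<rho> (etens n e \<phi>)"
  have "\<forall>i<n. basis2 (e i False) (e i True)"
    using e by (simp add: parity_eigenbasis_def)
  moreover have "w xs = 0" if "xs \<notin> idx n" for xs
    using that \<rho> by (simp add: w_def opapp_def Lset_def)
  ultimately obtain d where d: "w = (\<lambda>xs. \<Sum>\<psi>\<in>idx n. d \<psi> * etens n e \<psi> xs)"
    using etens_spanning by blast
  have "w = (\<lambda>xs. parity_sign \<phi> * opapp n (optens n v) w xs)"
    unfolding w_def
    by (subst (1) fixed[symmetric]) (simp only: opapp_parity_conj opapp_parity_etens[OF e \<phi>] opapp_scale)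
  also have "\<dots> = (\<lambda>xs. \<Sum>\<psi>\<in>idx n. (parity_sign \<phi> * parity_sign \<psi>) * d \<psi> * etens n e \<psi> xs)"
    by (subst d, subst opapp_lincomb)
      (auto simp: opapp_parity_etens[OF e] sum_distrib_left mult_ac intro!: sum.cong)
  finally have w_sign: "w = (\<lambda>xs. \<Sum>\<psi>\<in>idx n. (parity_sign \<phi> * parity_sign \<psi>) * d \<psi> * etens n e \<psi> xs)" .
  have "w = (\<lambda>xs. \<Sum>\<psi>\<in>{\<psi>\<in>idx n. parity \<psi> = parity \<phi>}. d \<psi> * etens n e \<psi> xs)"
  proof (intro ext)
    fix xs
    have "w xs = (w xs + w xs) / 2" by simp
    also have "\<dots> = (\<Sum>\<psi>\<in>idx n. ((1 + parity_sign \<phi> * parity_sign \<psi>) / 2) * (d \<psi> * etens n e \<psi> xs))"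
      by (subst (1) d, subst w_sign) (simp add: sum.distrib[symmetric] sum_divide_distrib algebra_simps)
    also have "\<dots> = (\<Sum>\<psi>\<in>idx n. if parity \<psi> = parity \<phi> then d \<psi> * etens n e \<psi> xs else 0)"
      by (intro sum.cong refl) (auto simp: parity_sign_def)
    finally show "w xs = (\<Sum>\<psi>\<in>{\<psi>\<in>idx n. parity \<psi> = parity \<phi>}. d \<psi> * etens n e \<psi> xs)"
      by (simp add: sum.inter_filter)
  qed
  then show ?thesis unfolding w_def by blast
qed

text \<open>The conjugate of \<open>diag(1, -1)\<close> by the matrix with columns \<open>x\<close> and \<open>y\<close>.\<close>

definition reflection_of_basis :: "(bool \<Rightarrow> complex) \<Rightarrow> (bool \<Rightarrow> complex) \<Rightarrow> m2" where
  "reflection_of_basis x y = (\<lambda>a b. (if a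
     then (if b then - (x False * y True + x True * y False) else 2 * x True * y True)
     else (if b then - 2 * x False * y False else x False * y True + x True * y False)) / det2 x y)"

lemma reflection_of_basis:
  assumes "basis2 x y"
  shows "reflection (reflection_of_basis x y)"
    and "(\<Sum>b\<in>UNIV. reflection_of_basis x y a b * x b) = x a"
    and "(\<Sum>b\<in>UNIV. reflection_of_basis x y a b * y b) = - y a"
proof -
  define d where "d = det2 x y"
  define M where "M = (\<lambda>a b. if a
     then (if b then - (x False * y True + x True * y False) else 2 * x True * y True)
     else (if b then - 2 * x False * y False else x False * y True + x True * y False))"
  have d: "d \<noteq> 0"
    using basis2_det2_nonzero[OF assms] by (simp add: d_def)
  have R: "reflection_of_basis x y = (\<lambda>a b. M a b / d)"
    by (simp add: reflection_of_basis_def M_def d_def)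
  have "m2_mult M M = (\<lambda>a b. (d * d) * id2 a b)"
    by (rule m2_eqI) (simp_all add: m2_mult_def M_def d_def id2_def sum_UNIV_bool det2_def algebra_simps)
  moreover have "m2_mult (\<lambda>a b. M a b / d) (\<lambda>a b. M a b / d) = (\<lambda>a b. m2_mult M M a b / (d * d))"
    by (simp add: m2_mult_def sum_UNIV_bool add_divide_distrib)
  ultimately show "reflection (reflection_of_basis x y)"
    using d by (simp add: R reflection_def sl2_def M_def add_divide_distrib[symmetric])
  have "(\<Sum>b\<in>UNIV. M a b * x b) = d * x a" "(\<Sum>b\<in>UNIV. M a b * y b) = - d * y a"
    by (cases a; simp add: M_def d_def det2_def sum_UNIV_bool algebra_simps)+
  then show "(\<Sum>b\<in>UNIV. reflection_of_basis x y a b * x b) = x a"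
    "(\<Sum>b\<in>UNIV. reflection_of_basis x y a b * y b) = - y a"
    using d by (simp_all add: R sum_UNIV_bool add_divide_distrib[symmetric])
qed

text \<open>A nonzero column of \<open>w + s id2\<close>: for a reflection \<open>w\<close> and \<open>s\<^sup>2 = 1\<close> we have
  \<open>w (w + s id2) = s (w + s id2)\<close>, so this is an eigenvector for the eigenvalue \<open>s\<close>.\<close>

definition eigvec :: "m2 \<Rightarrow> complex \<Rightarrow> bool \<Rightarrow> complex" where
  "eigvec w s = (if w False False + s \<noteq> 0 \<or> w True False \<noteq> 0
                 then (\<lambda>t. w t False + (if t then 0 else s))
                 else (\<lambda>t. w t True + (if t then s else 0)))"

lemma reflection_eigvec:
  assumes "reflection w" "s * s = 1"
  shows "(\<Sum>b\<in>UNIV. w a b * eigvec w s b) = s * eigvec w s a"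
proof (cases "w False False + s \<noteq> 0 \<or> w True False \<noteq> 0")
  case True
  then show ?thesis
    using reflection_entries[OF assms(1)] assms(2)
    by (cases a) (simp_all add: eigvec_def sum_UNIV_bool, algebra+)
next
  case False
  then have ev: "eigvec w s = (\<lambda>t. w t True + (if t then s else 0))"
    by (simp add: eigvec_def)
  have "w False False = - s" "w True False = 0"
    using False by (auto simp: add_eq_0_iff2)
  then show ?thesis
    using reflection_entries[OF assms(1)] assms(2)
    by (cases a) (simp_all add: ev sum_UNIV_bool)
qed

lemma eigvec_nonzero:
  assumes "reflection w" "s \<noteq> 0"
  shows "\<exists>t. eigvec w s t \<noteq> 0"
proof (cases "w False False + s \<noteq> 0 \<or> w True False \<noteq> 0")
  case True
  then show ?thesis by (auto simp: eigvec_def)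
next
  case False
  then have "eigvec w s True = 2 * s"
    using reflection_entries(1)[OF assms(1)] by (simp add: eigvec_def add_eq_0_iff2)
  then show ?thesis using assms(2) by (intro exI[of _ True]) simp
qed

lemma eigenvectors_basis2:
  assumes x: "\<And>a. (\<Sum>b\<in>UNIV. w a b * x b) = x a" and y: "\<And>a. (\<Sum>b\<in>UNIV. w a b * y b) = - y a"
    and "\<exists>t. x t \<noteq> 0" "\<exists>t. y t \<noteq> 0"
  shows "basis2 x y"
  unfolding basis2_def
proof (intro allI impI)
  fix \<alpha> \<beta> :: complex
  assume dep: "\<forall>t. \<alpha> * x t + \<beta> * y t = 0"
  have "\<alpha> * x a - \<beta> * y a = 0" for a
  proof -
    have "\<alpha> * x a - \<beta> * y a = \<alpha> * (\<Sum>b\<in>UNIV. w a b * x b) + \<beta> * (\<Sum>b\<in>UNIV. w a b * y b)"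
      by (simp add: x y)
    also have "\<dots> = (\<Sum>b\<in>UNIV. w a b * (\<alpha> * x b + \<beta> * y b))"
      by (simp add: sum_UNIV_bool algebra_simps)
    finally show ?thesis
      using dep by simp
  qed
  moreover have "2 * (\<alpha> * x a) = (\<alpha> * x a + \<beta> * y a) + (\<alpha> * x a - \<beta> * y a)" for a
    by (simp add: algebra_simps)
  ultimately have "\<alpha> * x a = 0" for a
    using dep by (metis add_0 mult_eq_0_iff zero_neq_numeral)
  moreover obtain s t where "x s \<noteq> 0" "y t \<noteq> 0"
    using assms(3,4) by blast
  ultimately have "\<alpha> = 0"
    by (metis mult_eq_0_iff)
  then show "\<alpha> = 0 \<and> \<beta> = 0"
    using dep[rule_format, of t] \<open>y t \<noteq> 0\<close> by simp
qed

lemma parity_eigenbasis_of_basis: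
  assumes "\<forall>i<n. basis2 (e i False) (e i True)"
  shows "reflection_sys n (\<lambda>i. reflection_of_basis (e i False) (e i True))"
    and "parity_eigenbasis n (\<lambda>i. reflection_of_basis (e i False) (e i True)) e"
proof -
  have "(if c then e i True else e i False) = e i c" for i c by simp
  then show "reflection_sys n (\<lambda>i. reflection_of_basis (e i False) (e i True))"
    "parity_eigenbasis n (\<lambda>i. reflection_of_basis (e i False) (e i True)) e"
    using assms reflection_of_basis
    by (auto simp: reflection_sys_def parity_eigenbasis_def all_bool_eq)
qed

lemma parity_eigenbasis_of_reflection_sys:
  assumes "reflection_sys n v"
  shows "parity_eigenbasis n v (\<lambda>i c. eigvec (v i) (if c then -1 else 1))"
  unfolding parity_eigenbasis_def
proof (intro allI impI conjI)
  fix i assume "i < n"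
  then have w: "reflection (v i)"
    using assms by (simp add: reflection_sys_def)
  have eig: "(\<Sum>b\<in>UNIV. v i a b * eigvec (v i) s b) = s * eigvec (v i) s a" if "s * s = 1" for a s
    using reflection_eigvec[OF w that] .
  show "basis2 (eigvec (v i) (if False then -1 else 1)) (eigvec (v i) (if True then -1 else 1))"
    using eig[of 1] eig[of "-1"] eigvec_nonzero[OF w, of 1] eigvec_nonzero[OF w, of "-1"]
    by (auto intro!: eigenvectors_basis2[of "v i"])
  show "(\<Sum>b\<in>UNIV. v i a b * eigvec (v i) (if c then -1 else 1) b)
      = (if c then -1 else 1) * eigvec (v i) (if c then -1 else 1) a" for a c
    using eig by simp
qed

lemma X_state_iff_parity_conj_fixed:
  assumes \<rho>: "\<rho> \<in> Lset n"
  shows "X_state n \<rho> \<longleftrightarrow> (\<exists>v. reflection_sys n v \<and> parity_conj n v \<rho> = \<rho>)"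
proof
  assume "X_state n \<rho>"
  then obtain e where e: "\<forall>i<n. basis2 (e i False) (e i True)"
    and block: "\<forall>\<phi>\<in>idx n. \<exists>c. opapp n \<rho> (etens n e \<phi>) =
                  (\<lambda>xs. \<Sum>\<psi>\<in>{\<psi>\<in>idx n. parity \<psi> = parity \<phi>}. c \<psi> * etens n e \<psi> xs)"
    unfolding X_state_def by blast
  show "\<exists>v. reflection_sys n v \<and> parity_conj n v \<rho> = \<rho>"
    using parity_eigenbasis_of_basis[OF e] parity_conj_fixed_if_block_diag[OF _ \<rho> block] by blast
next
  assume "\<exists>v. reflection_sys n v \<and> parity_conj n v \<rho> = \<rho>"
  then obtain v where v: "reflection_sys n v" and fixed: "parity_conj n v \<rho> = \<rho>"
    by blast
  define e where "e i c = eigvec (v i) (if c then -1 else 1)" for i c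
  have e: "parity_eigenbasis n v e"
    unfolding e_def by (rule parity_eigenbasis_of_reflection_sys[OF v])
  then have "\<forall>i<n. basis2 (e i False) (e i True)"
    by (simp add: parity_eigenbasis_def)
  then show "X_state n \<rho>"
    unfolding X_state_def using block_diag_if_parity_conj_fixed[OF e \<rho> fixed] by blast
qed

section \<open>Normalising a longitudinal system\<close>

lemma sl2_square: "A \<in> sl2 \<Longrightarrow> m2_mult A A = (\<lambda>a b. form2 A A * id2 a b)"
  using sl2_entries[of A]
  by (intro m2_eqI) (simp_all add: m2_mult_def form2_def id2_def sum_UNIV_bool algebra_simps)

lemma long_line_scale: "k \<noteq> 0 \<Longrightarrow> long_line (\<lambda>a b. k * w a b) = long_line w"
  unfolding long_line_def
  by (auto simp: mult.assoc[symmetric] intro: exI[where x = "_ / k"] exI[where x = "_ * k"])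

lemma VIe_cong:
  assumes "\<And>i. i \<in> I \<Longrightarrow> long_line (v' i) = long_line (v i)"
  shows "VIe n v' I = VIe n v I"
proof -
  have "trans_space (v' i) = trans_space (v i)" if "i \<in> I" for i
    using assms that by (simp add: trans_space_def)
  then have "VIe_gens n v' I = VIe_gens n v I"
    unfolding VIe_gens_def using assms
    by (intro Collect_cong ex_cong1 conj_cong refl) auto
  then show ?thesis
    by (simp add: VIe_eq_cspan)
qed

lemma long_sys_normalize:
  assumes "long_sys n v"
  shows "\<exists>v'. reflection_sys n v' \<and> (\<forall>I\<in>Isets n. VIe n v' I = VIe n v I)"
proof -
  define s where "s i = csqrt (form2 (v i) (v i))" for i
  define v' where "v' i = (\<lambda>a b. inverse (s i) * v i a b)" for i
  have v: "v i \<in> sl2" "s i \<noteq> 0" if "i < n" for i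
    using assms that by (auto simp: long_sys_def s_def)
  have "reflection (v' i)" if "i < n" for i
  proof -
    have "m2_mult (v' i) (v' i) = (\<lambda>a b. inverse (s i) * inverse (s i) * m2_mult (v i) (v i) a b)"
      by (simp add: m2_mult_def v'_def sum_UNIV_bool algebra_simps)
    also have "\<dots> = id2"
      using v[OF that] by (simp add: sl2_square s_def power2_eq_square[symmetric] field_simps)
    finally show ?thesis
      using v[OF that] by (simp add: reflection_def v'_def sl2_def distrib_left[symmetric])
  qed
  moreover have "VIe n v' I = VIe n v I" if "I \<in> Isets n" for I
    using v Isets_subset[OF that] unfolding v'_def
    by (intro VIe_cong long_line_scale) auto
  ultimately show ?thesis
    unfolding reflection_sys_def by blast
qed

lemma reflection_sys_imp_long_sys: "reflection_sys n v \<Longrightarrow> long_sys n v"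
  by (simp add: reflection_sys_def long_sys_def form2_reflection_self reflection_def)

theorem lemma4p7:
  fixes n :: nat and \<rho> :: op
  assumes "\<rho> \<in> Lset n"
  shows "X_state n \<rho> \<longleftrightarrow>
         (\<exists>v. long_sys n v \<and> (\<forall>I\<in>Isets n. bloch n \<rho> I \<in> VIe n v I))"
proof
  assume "X_state n \<rho>"
  then obtain v where v: "reflection_sys n v" and "parity_conj n v \<rho> = \<rho>"
    using X_state_iff_parity_conj_fixed[OF assms] by blast
  then have "\<forall>I\<in>Isets n. bloch n \<rho> I \<in> VIe n v I"
    using parity_conj_fixed_iff_bloch_VIe[OF v assms] by blast
  then show "\<exists>v. long_sys n v \<and> (\<forall>I\<in>Isets n. bloch n \<rho> I \<in> VIe n v I)"
    using reflection_sys_imp_long_sys[OF v] by blast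
next
  assume "\<exists>v. long_sys n v \<and> (\<forall>I\<in>Isets n. bloch n \<rho> I \<in> VIe n v I)"
  then obtain v where "long_sys n v" and bloch: "\<forall>I\<in>Isets n. bloch n \<rho> I \<in> VIe n v I"
    by blast
  then obtain v' where v': "reflection_sys n v'" and "\<forall>I\<in>Isets n. VIe n v' I = VIe n v I"
    using long_sys_normalize by blast
  then have "parity_conj n v' \<rho> = \<rho>"
    using parity_conj_fixed_iff_bloch_VIe[OF v' assms] bloch by simp
  then show "X_state n \<rho>"
    using X_state_iff_parity_conj_fixed[OF assms] v' by blast
qed

end
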